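(* Let $f_1,\dots,f_n$ be nondecreasing linear functions at least one of which is constant, let $\beta_{\min}=\min\{\beta(f_i)\mid\alpha(f_i)=0\}$, and let $\sigma$ be a locally optimal permutation. Let $q_\sigma=\max\{q\in[n]\mid\alpha(f_{\sigma(q)})=0\}$; note $f^\sigma$ is a constant function, identified with its value. Then: (i) $f^\sigma\le\beta_{\min}$; (ii) $f_{\sigma(q_\sigma)}$ is the constant function with value $\beta_{\min}$; (iii) $\theta(f_{\sigma(i)})\in[\theta(f^\sigma)-\pi,\theta(\beta_{\min})]_{2\pi}\cup\{\bot\}$ for every $i\in[q_\sigma]$; (iv) $\theta(f_{\sigma(i)})\in[\theta(\beta_{\min}),\theta(f^\sigma)+\pi]\cup\{\bot\}$ for every $i$ with $q_\sigma\le i\le n$.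
   Context: A linear function is $f(x)=ax+b$; $\alpha(f)=a$, $\beta(f)=b$; nondecreasing means $a\ge0$, constant means $a=0$. $\vec f=(b,1-a)^\top$, $\theta(f)\in[0,2\pi)$ its polar angle, $\theta(f)=\bot$ if $\vec f=0$; for a real $c$, $\theta(c)$ is the polar angle of $(c,1)^\top$. $[\theta_1,\theta_2]_{2\pi}=\{\theta\in[\lambda_1,\lambda_2]\mid\lambda_1-\theta_1,\lambda_2-\theta_2\in2\pi\mathbb{Z},\ \lambda_2-\lambda_1\in[0,2\pi)\}$; $[\cdot,\cdot]$ without subscript is an ordinary real interval. $f^\sigma=f_{\sigma(n)}\circ\cdots\circ f_{\sigma(1)}$. For $1\le\ell\le m<r\le n$, $\sigma_{\ell,m,r}$ swaps the adjacent blocks $(\sigma(\ell),\dots,\sigma(m))$ and $(\sigma(m+1),\dots,\sigma(r))$ of $\sigma$; $\sigma$ is locally optimal if $f^\sigma\le f^{\sigma_{\ell,m,r}}$ for all such $\ell,m,r$. *)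

theory Defs
  imports "HOL-Analysis.Analysis"
begin

text \<open>A linear function f(x) = a x + b is given by its coefficients; a family
  f_1,...,f_n is given by coefficient maps alpha, beta :: nat => real on {1..n}.\<close>

definition lin :: "real \<Rightarrow> real \<Rightarrow> real \<Rightarrow> real" where
  "lin a b x = a * x + b"

fun comp_upto :: "(nat \<Rightarrow> real) \<Rightarrow> (nat \<Rightarrow> real) \<Rightarrow> (nat \<Rightarrow> nat) \<Rightarrow> nat \<Rightarrow> real \<Rightarrow> real" where
  "comp_upto \<alpha> \<beta> \<sigma> 0 x = x"
| "comp_upto \<alpha> \<beta> \<sigma> (Suc k) x = lin (\<alpha> (\<sigma> (Suc k))) (\<beta> (\<sigma> (Suc k))) (comp_upto \<alpha> \<beta> \<sigma> k x)"

definition fpow :: "(nat \<Rightarrow> real) \<Rightarrow> (nat \<Rightarrow> real) \<Rightarrow> nat \<Rightarrow> (nat \<Rightarrow> nat) \<Rightarrow> real \<Rightarrow> real" where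
  "fpow \<alpha> \<beta> n \<sigma> = comp_upto \<alpha> \<beta> \<sigma> n"

text \<open>sigma_{l,m,r}: swap adjacent blocks (sigma(l..m)) and (sigma(m+1..r)).\<close>
definition block_swap :: "(nat \<Rightarrow> nat) \<Rightarrow> nat \<Rightarrow> nat \<Rightarrow> nat \<Rightarrow> nat \<Rightarrow> nat" where
  "block_swap \<sigma> l m r i =
     (if i < l \<or> r < i then \<sigma> i
      else if i < l + (r - m) then \<sigma> (m + 1 + (i - l))
      else \<sigma> (l + (i - l - (r - m))))"

definition locally_optimal :: "(nat \<Rightarrow> real) \<Rightarrow> (nat \<Rightarrow> real) \<Rightarrow> nat \<Rightarrow> (nat \<Rightarrow> nat) \<Rightarrow> bool" where
  "locally_optimal \<alpha> \<beta> n \<sigma> \<longleftrightarrow>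
     (\<forall>l m r. 1 \<le> l \<and> l \<le> m \<and> m < r \<and> r \<le> n \<longrightarrow>
        (\<forall>x. fpow \<alpha> \<beta> n \<sigma> x \<le> fpow \<alpha> \<beta> n (block_swap \<sigma> l m r) x))"

definition polar_angle :: "real \<Rightarrow> real \<Rightarrow> real" where
  "polar_angle x y = (if 0 \<le> Arg (Complex x y) then Arg (Complex x y) else Arg (Complex x y) + 2 * pi)"

text \<open>theta(f) for f(x) = a x + b: polar angle of (b, 1 - a); None encodes bottom.\<close>
definition theta_lin :: "real \<Rightarrow> real \<Rightarrow> real option" where
  "theta_lin a b = (if b = 0 \<and> 1 - a = 0 then None else Some (polar_angle b (1 - a)))"

definition theta_const :: "real \<Rightarrow> real" where
  "theta_const c = polar_angle c 1"

definition cyc_interval :: "real \<Rightarrow> real \<Rightarrow> real set" where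
  "cyc_interval t1 t2 = {t. \<exists>l1 l2. l1 \<le> t \<and> t \<le> l2 \<and>
       (\<exists>k::int. l1 - t1 = 2 * pi * k) \<and> (\<exists>k::int. l2 - t2 = 2 * pi * k) \<and>
       0 \<le> l2 - l1 \<and> l2 - l1 < 2 * pi}"

end

theory Submission
  imports Defs
begin

text \<open>Let \<open>q\<close> be the last position of a constant function. Everything after \<open>q\<close> is strictly
  increasing, so inequalities can be cancelled through the suffix, and \<open>f\<^sup>\<sigma>\<close> is the constant
  obtained by pushing \<open>b = \<beta>(\<sigma> q)\<close> through \<open>f\<^sub>\<sigma>\<^sub>(\<^sub>q\<^sub>+\<^sub>1\<^sub>), \<dots>, f\<^sub>\<sigma>\<^sub>(\<^sub>n\<^sub>)\<close>. Swapping a single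
  \<open>f\<^sub>\<sigma>\<^sub>(\<^sub>i\<^sub>)\<close>, \<open>i < q\<close>, with the block after it up to \<open>q\<close> (resp. up to \<open>n\<close>) gives
  \<open>b \<le> f\<^sub>\<sigma>\<^sub>(\<^sub>i\<^sub>)(b)\<close> (resp. \<open>f\<^sup>\<sigma> \<le> f\<^sub>\<sigma>\<^sub>(\<^sub>i\<^sub>)(f\<^sup>\<sigma>)\<close>); for the constant functions the former is
  \<open>b \<le> \<beta>\<close>, so \<open>b = \<beta>\<^sub>m\<^sub>i\<^sub>n\<close>. Swapping \<open>f\<^sub>\<sigma>\<^sub>(\<^sub>q\<^sub>+\<^sub>d\<^sub>+\<^sub>1\<^sub>)\<close> with the block \<open>q..q+d\<close> shows that the
  partial values \<open>y\<^sub>d\<close> after \<open>f\<^sub>\<sigma>\<^sub>(\<^sub>q\<^sub>+\<^sub>d\<^sub>)\<close> decrease from \<open>\<beta>\<^sub>m\<^sub>i\<^sub>n\<close> to \<open>f\<^sup>\<sigma>\<close> with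
  \<open>f\<^sub>\<sigma>\<^sub>(\<^sub>q\<^sub>+\<^sub>d\<^sub>+\<^sub>1\<^sub>)(y\<^sub>d) \<le> y\<^sub>d\<close>. Since \<open>x - f(x)\<close> is the cross product of \<open>(x, 1)\<close> and the
  vector of \<open>f\<close>, lying above the diagonal at \<open>f\<^sup>\<sigma>\<close> and \<open>\<beta>\<^sub>m\<^sub>i\<^sub>n\<close> gives (iii), and lying below it
  somewhere on \<open>[f\<^sup>\<sigma>, \<beta>\<^sub>m\<^sub>i\<^sub>n]\<close>, hence at an endpoint, gives (iv).\<close>

lemma polar_angle_bounds: "0 \<le> polar_angle x y \<and> polar_angle x y < 2 * pi"
  using mpi_less_Arg[of "Complex x y"] Arg_le_pi[of "Complex x y"]
  by (auto simp: polar_angle_def)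

lemma polar_angle_polar_form:
  assumes "(x, y) \<noteq> (0, 0)"
  obtains r where "0 < r" "x = r * cos (polar_angle x y)" "y = r * sin (polar_angle x y)"
proof -
  let ?z = "Complex x y"
  have "?z \<noteq> 0" using assms by (simp add: complex_eq_iff)
  moreover have "x = cmod ?z * cos (Arg ?z)" "y = cmod ?z * sin (Arg ?z)"
    using arg_cong[OF rcis_cmod_Arg[of ?z], of Re] arg_cong[OF rcis_cmod_Arg[of ?z], of Im]
    by (simp_all add: rcis_def cis.sel)
  moreover have "cos (Arg ?z + 2 * pi) = cos (Arg ?z)" "sin (Arg ?z + 2 * pi) = sin (Arg ?z)"
    by (simp_all add: cos_add sin_add)
  ultimately show ?thesis
    by (intro that[of "cmod ?z"]) (auto simp: polar_angle_def)
qed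

lemma sin_nonneg_imp_angle_bounds:
  fixes s :: real
  assumes "- pi < s" "s < 2 * pi" "0 \<le> sin s"
  shows "0 \<le> s \<and> s \<le> pi"
proof -
  have "\<not> s < 0" using sin_gt_zero[of "- s"] assms by auto
  moreover have "\<not> pi < s" using sin_lt_zero[of s] assms by linarith
  ultimately show ?thesis by simp
qed

lemma sin_nonpos_imp_angle_bounds:
  fixes s :: real
  assumes "sin s \<le> 0"
  shows "s \<le> 0 \<or> pi \<le> s"
  using sin_gt_zero[of s] assms by linarith

lemma theta_const_bounds: "0 < theta_const c \<and> theta_const c < pi"
proof -
  obtain r where "0 < r" "1 = r * sin (theta_const c)"
    using polar_angle_polar_form[of c 1] unfolding theta_const_def by auto
  then have "0 < sin (theta_const c)" by (metis zero_less_mult_iff zero_less_one order.asym)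
  moreover have "0 \<le> theta_const c" "theta_const c < 2 * pi"
    using polar_angle_bounds[of c 1] by (simp_all add: theta_const_def)
  ultimately show ?thesis
    using sin_le_zero[of "theta_const c"] by (metis order.order_iff_strict not_le sin_zero)
qed

text \<open>\<open>x v - u\<close> is the cross product of \<open>(x, 1)\<close> and \<open>(u, v)\<close>; for \<open>(u, v) = (b, 1 - a)\<close>
  it equals \<open>x - lin a b x\<close>, so comparing a linear function with the diagonal locates its angle.\<close>

lemma cross_eq_sin_angle_diff:
  assumes "(u, v) \<noteq> (0, 0)"
  obtains k where "0 < k" "x * v - u = k * sin (polar_angle u v - theta_const x)"
proof -
  obtain p where p: "0 < p" "x = p * cos (theta_const x)" "1 = p * sin (theta_const x)"
    using polar_angle_polar_form[of x 1] unfolding theta_const_def by auto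
  obtain r where r: "0 < r" "u = r * cos (polar_angle u v)" "v = r * sin (polar_angle u v)"
    using polar_angle_polar_form[OF assms] by auto
  have "p * r * (sin (polar_angle u v) * cos (theta_const x) - cos (polar_angle u v) * sin (theta_const x))
      = (p * cos (theta_const x)) * (r * sin (polar_angle u v))
        - (r * cos (polar_angle u v)) * (p * sin (theta_const x))"
    by (simp add: algebra_simps)
  also have "\<dots> = x * v - u" by (simp flip: p(2,3) r(2,3))
  finally have "x * v - u = p * r * (sin (polar_angle u v) * cos (theta_const x)
                              - cos (polar_angle u v) * sin (theta_const x))" ..
  then show ?thesis
    using p(1) r(1) by (intro that[of "p * r"]) (simp_all add: sin_diff)
qed

lemma cross_nonneg_imp_polar_angle_mem:
  assumes "(u, v) \<noteq> (0, 0)" "0 \<le> x * v - u"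
  shows "polar_angle u v \<in> {theta_const x .. theta_const x + pi}"
proof -
  obtain k where "0 < k" "x * v - u = k * sin (polar_angle u v - theta_const x)"
    using cross_eq_sin_angle_diff[OF assms(1)] .
  then have "0 \<le> sin (polar_angle u v - theta_const x)"
    using assms(2) by (simp add: zero_le_mult_iff)
  then show ?thesis
    using sin_nonneg_imp_angle_bounds[of "polar_angle u v - theta_const x"]
      polar_angle_bounds[of u v] theta_const_bounds[of x]
    by auto
qed

lemma cross_nonpos_imp_polar_angle_notin:
  assumes "(u, v) \<noteq> (0, 0)" "x * v - u \<le> 0"
  shows "polar_angle u v \<le> theta_const x \<or> theta_const x + pi \<le> polar_angle u v"
proof -
  obtain k where "0 < k" "x * v - u = k * sin (polar_angle u v - theta_const x)"
    using cross_eq_sin_angle_diff[OF assms(1)] .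
  then have "sin (polar_angle u v - theta_const x) \<le> 0"
    using assms(2) by (simp add: mult_le_0_iff)
  then show ?thesis using sin_nonpos_imp_angle_bounds by fastforce
qed

lemma theta_const_antimono:
  assumes "c \<le> b"
  shows "theta_const b \<le> theta_const c"
  using cross_nonpos_imp_polar_angle_notin[of b 1 c] assms
    theta_const_bounds[of b] theta_const_bounds[of c]
  by (auto simp: theta_const_def)

lemma cyc_intervalI:
  fixes k1 k2 :: int
  assumes "t1 + 2 * pi * k1 \<le> t" "t \<le> t2 + 2 * pi * k2"
    and "0 \<le> (t2 + 2 * pi * k2) - (t1 + 2 * pi * k1)" "(t2 + 2 * pi * k2) - (t1 + 2 * pi * k1) < 2 * pi"
  shows "t \<in> cyc_interval t1 t2"
  unfolding cyc_interval_def using assms by force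

lemma lin_ge_at_two_points_imp_theta_mem:
  assumes "c \<le> b0" "b0 \<le> lin a b b0" "c \<le> lin a b c" "(b, 1 - a) \<noteq> (0, 0)"
  shows "polar_angle b (1 - a) \<in> cyc_interval (theta_const c - pi) (theta_const b0)"
proof -
  let ?t = "polar_angle b (1 - a)"
  have "?t \<le> theta_const b0 \<or> theta_const b0 + pi \<le> ?t"
    "?t \<le> theta_const c \<or> theta_const c + pi \<le> ?t"
    using cross_nonpos_imp_polar_angle_notin[OF assms(4)] assms(2,3)
    by (simp_all add: lin_def algebra_simps)
  moreover have "theta_const b0 \<le> theta_const c" using theta_const_antimono[OF assms(1)] .
  moreover note theta_const_bounds[of b0] theta_const_bounds[of c] polar_angle_bounds[of b "1 - a"]
  ultimately consider "?t \<le> theta_const b0" | "theta_const c + pi \<le> ?t" by linarith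
  then show ?thesis
  proof cases
    case 1
    then show ?thesis
      using cyc_intervalI[of "theta_const c - pi" 0 ?t "theta_const b0" 0]
        \<open>theta_const b0 \<le> theta_const c\<close> theta_const_bounds[of c] polar_angle_bounds[of b "1 - a"]
      by simp
  next
    case 2
    then show ?thesis
      using cyc_intervalI[of "theta_const c - pi" 1 ?t "theta_const b0" 1]
        \<open>theta_const b0 \<le> theta_const c\<close> theta_const_bounds[of b0] theta_const_bounds[of c]
        polar_angle_bounds[of b "1 - a"]
      by simp
  qed
qed

lemma affine_le_somewhere_imp_le_at_endpoint:
  fixes a b c y B :: real
  assumes "c \<le> y" "y \<le> B" "lin a b y \<le> y"
  shows "lin a b B \<le> B \<or> lin a b c \<le> c"
proof (cases "0 \<le> 1 - a")
  case True
  have "(1 - a) * y \<le> (1 - a) * B" using True assms by (intro mult_left_mono) auto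
  then show ?thesis using assms by (auto simp: lin_def algebra_simps)
next
  case False
  have "(1 - a) * y \<le> (1 - a) * c" using False assms by (intro mult_left_mono_neg) auto
  then show ?thesis using assms by (auto simp: lin_def algebra_simps)
qed

lemma lin_le_somewhere_imp_theta_mem:
  assumes "c \<le> y" "y \<le> b0" "lin a b y \<le> y" "(b, 1 - a) \<noteq> (0, 0)"
  shows "polar_angle b (1 - a) \<in> {theta_const b0 .. theta_const c + pi}"
proof -
  have "theta_const b0 \<le> theta_const c" using assms(1,2) by (intro theta_const_antimono) simp
  moreover have "lin a b b0 \<le> b0 \<or> lin a b c \<le> c"
    using affine_le_somewhere_imp_le_at_endpoint[OF assms(1-3)] .
  ultimately show ?thesis
    using cross_nonneg_imp_polar_angle_mem[OF assms(4), of b0]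
      cross_nonneg_imp_polar_angle_mem[OF assms(4), of c]
    by (auto simp: lin_def algebra_simps)
qed

fun comp_block :: "(nat \<Rightarrow> real) \<Rightarrow> (nat \<Rightarrow> real) \<Rightarrow> (nat \<Rightarrow> nat) \<Rightarrow> nat \<Rightarrow> nat \<Rightarrow> real \<Rightarrow> real" where
  "comp_block \<alpha> \<beta> \<tau> j 0 x = x"
| "comp_block \<alpha> \<beta> \<tau> j (Suc d) x =
     lin (\<alpha> (\<tau> (j + Suc d))) (\<beta> (\<tau> (j + Suc d))) (comp_block \<alpha> \<beta> \<tau> j d x)"

lemma comp_upto_eq_comp_block: "comp_upto \<alpha> \<beta> \<tau> k x = comp_block \<alpha> \<beta> \<tau> 0 k x"
  by (induction k) auto

lemma comp_block_add:
  "comp_block \<alpha> \<beta> \<tau> j (d1 + d2) x = comp_block \<alpha> \<beta> \<tau> (j + d1) d2 (comp_block \<alpha> \<beta> \<tau> j d1 x)"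
  by (induction d2) (auto simp: add_ac)

lemma comp_block_split:
  "i \<le> j \<Longrightarrow> j \<le> k \<Longrightarrow>
   comp_block \<alpha> \<beta> \<tau> i (k - i) x = comp_block \<alpha> \<beta> \<tau> j (k - j) (comp_block \<alpha> \<beta> \<tau> i (j - i) x)"
  using comp_block_add[of \<alpha> \<beta> \<tau> i "j - i" "k - j" x] by simp

lemma comp_block_cong:
  "(\<And>e. e < d \<Longrightarrow> \<tau> (j + Suc e) = \<tau>' (j' + Suc e)) \<Longrightarrow>
   comp_block \<alpha> \<beta> \<tau> j d x = comp_block \<alpha> \<beta> \<tau>' j' d x"
  by (induction d) auto

lemma comp_block_through_const:
  assumes "j < q" "q \<le> j + d" "\<alpha> (\<tau> q) = 0"
  shows "comp_block \<alpha> \<beta> \<tau> j d x = comp_block \<alpha> \<beta> \<tau> q (j + d - q) (\<beta> (\<tau> q))"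
proof -
  obtain e where e: "q - j = Suc e" "j + Suc e = q"
    using assms(1) by (metis Suc_diff_Suc add_Suc_right le_add_diff_inverse less_imp_le)
  then have "comp_block \<alpha> \<beta> \<tau> j (q - j) x = \<beta> (\<tau> q)" using assms by (simp add: lin_def)
  then show ?thesis using comp_block_add[of \<alpha> \<beta> \<tau> j "q - j" "j + d - q" x] assms by simp
qed

lemma comp_block_strict_mono:
  "(\<And>e. e < d \<Longrightarrow> 0 < \<alpha> (\<tau> (j + Suc e))) \<Longrightarrow> x < y \<Longrightarrow>
   comp_block \<alpha> \<beta> \<tau> j d x < comp_block \<alpha> \<beta> \<tau> j d y"
  by (induction d) (auto simp: lin_def)

lemma comp_block_le_cancel:
  "(\<And>e. e < d \<Longrightarrow> 0 < \<alpha> (\<tau> (j + Suc e))) \<Longrightarrow>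
   comp_block \<alpha> \<beta> \<tau> j d x \<le> comp_block \<alpha> \<beta> \<tau> j d y \<Longrightarrow> x \<le> y"
  using comp_block_strict_mono[of d \<alpha> \<tau> j y x \<beta>] by force

text \<open>Local optimality in terms of blocks: with \<open>P\<close> the prefix up to \<open>l - 1\<close>, \<open>B\<^sub>1\<close>, \<open>B\<^sub>2\<close>
  the blocks \<open>l..m\<close>, \<open>m+1..r\<close> and \<open>T\<close> the suffix, \<open>T (B\<^sub>2 (B\<^sub>1 (P x))) \<le> T (B\<^sub>1 (B\<^sub>2 (P x)))\<close>.\<close>

lemma locally_optimal_block_swap_le:
  assumes lo: "locally_optimal \<alpha> \<beta> n \<sigma>" and lmr: "1 \<le> l" "l \<le> m" "m < r" "r \<le> n"
  shows "comp_block \<alpha> \<beta> \<sigma> r (n - r) (comp_block \<alpha> \<beta> \<sigma> m (r - m)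
           (comp_block \<alpha> \<beta> \<sigma> (l - 1) (m - (l - 1)) (comp_block \<alpha> \<beta> \<sigma> 0 (l - 1) x)))
       \<le> comp_block \<alpha> \<beta> \<sigma> r (n - r) (comp_block \<alpha> \<beta> \<sigma> (l - 1) (m - (l - 1))
           (comp_block \<alpha> \<beta> \<sigma> m (r - m) (comp_block \<alpha> \<beta> \<sigma> 0 (l - 1) x)))"
proof -
  define \<tau> where "\<tau> = block_swap \<sigma> l m r"
  define k where "k = l - 1 + (r - m)"
  have k: "l - 1 \<le> k" "k \<le> r" "r - k = m - (l - 1)" "k - (l - 1) = r - m"
    using lmr by (auto simp: k_def)
  have "fpow \<alpha> \<beta> n \<sigma> x \<le> fpow \<alpha> \<beta> n \<tau> x"
    using lo lmr unfolding locally_optimal_def \<tau>_def by blast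
  moreover have "fpow \<alpha> \<beta> n \<sigma> x = comp_block \<alpha> \<beta> \<sigma> r (n - r) (comp_block \<alpha> \<beta> \<sigma> m (r - m)
      (comp_block \<alpha> \<beta> \<sigma> (l - 1) (m - (l - 1)) (comp_block \<alpha> \<beta> \<sigma> 0 (l - 1) x)))"
    using comp_block_split[of 0 r n \<alpha> \<beta> \<sigma> x] comp_block_split[of 0 m r \<alpha> \<beta> \<sigma> x]
      comp_block_split[of 0 "l - 1" m \<alpha> \<beta> \<sigma> x] lmr
    by (simp add: fpow_def comp_upto_eq_comp_block)
  moreover have "fpow \<alpha> \<beta> n \<tau> x = comp_block \<alpha> \<beta> \<tau> r (n - r) (comp_block \<alpha> \<beta> \<tau> k (m - (l - 1))
      (comp_block \<alpha> \<beta> \<tau> (l - 1) (r - m) (comp_block \<alpha> \<beta> \<tau> 0 (l - 1) x)))"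
    using comp_block_split[of 0 r n \<alpha> \<beta> \<tau> x] comp_block_split[of 0 k r \<alpha> \<beta> \<tau> x]
      comp_block_split[of 0 "l - 1" k \<alpha> \<beta> \<tau> x] lmr k
    by (simp add: fpow_def comp_upto_eq_comp_block)
  moreover have "comp_block \<alpha> \<beta> \<tau> r (n - r) z = comp_block \<alpha> \<beta> \<sigma> r (n - r) z"
    and "comp_block \<alpha> \<beta> \<tau> k (m - (l - 1)) z = comp_block \<alpha> \<beta> \<sigma> (l - 1) (m - (l - 1)) z"
    and "comp_block \<alpha> \<beta> \<tau> (l - 1) (r - m) z = comp_block \<alpha> \<beta> \<sigma> m (r - m) z"
    and "comp_block \<alpha> \<beta> \<tau> 0 (l - 1) z = comp_block \<alpha> \<beta> \<sigma> 0 (l - 1) z" for z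
    using lmr by (auto intro!: comp_block_cong simp: \<tau>_def block_swap_def k_def)
  ultimately show ?thesis by simp
qed

locale locally_optimal_family =
  fixes \<alpha> \<beta> :: "nat \<Rightarrow> real" and n :: nat and \<sigma> :: "nat \<Rightarrow> nat"
  assumes nondec: "\<forall>i\<in>{1..n}. 0 \<le> \<alpha> i"
    and const_ex: "\<exists>i\<in>{1..n}. \<alpha> i = 0"
    and perm: "\<sigma> permutes {1..n}"
    and locopt: "locally_optimal \<alpha> \<beta> n \<sigma>"
begin

definition last_const :: nat where
  "last_const = Max {q \<in> {1..n}. \<alpha> (\<sigma> q) = 0}"

definition last_value :: real where
  "last_value = \<beta> (\<sigma> last_const)"

definition tail_value :: "nat \<Rightarrow> real" where
  "tail_value d = comp_block \<alpha> \<beta> \<sigma> last_const d last_value"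

definition composite_value :: real where
  "composite_value = fpow \<alpha> \<beta> n \<sigma> 0"

lemma const_position_le_last_const:
  assumes "i \<in> {1..n}" "\<alpha> (\<sigma> i) = 0"
  shows "i \<le> last_const"
  using assms unfolding last_const_def by (intro Max_ge) auto

lemma last_const_props: "1 \<le> last_const" "last_const \<le> n" "\<alpha> (\<sigma> last_const) = 0"
proof -
  obtain j where j: "j \<in> {1..n}" "\<alpha> j = 0" using const_ex by blast
  then obtain p where "p \<in> {1..n}" "\<sigma> p = j" using perm by (metis permutes_image imageE)
  then have "{q \<in> {1..n}. \<alpha> (\<sigma> q) = 0} \<noteq> {}" using j by blast
  then have "last_const \<in> {q \<in> {1..n}. \<alpha> (\<sigma> q) = 0}"
    unfolding last_const_def by (intro Max_in) auto
  then show "1 \<le> last_const" "last_const \<le> n" "\<alpha> (\<sigma> last_const) = 0" by auto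
qed

lemma alpha_pos_after_last_const:
  assumes "last_const < k" "k \<le> n"
  shows "0 < \<alpha> (\<sigma> k)"
proof -
  have "k \<in> {1..n}" using assms last_const_props by auto
  then have "0 \<le> \<alpha> (\<sigma> k)" "\<alpha> (\<sigma> k) \<noteq> 0"
    using nondec permutes_in_image[OF perm] const_position_le_last_const[of k] assms(1) by auto
  then show ?thesis by simp
qed

lemma comp_block_le_cancel_after_last_const:
  assumes "last_const \<le> j" "comp_block \<alpha> \<beta> \<sigma> j (n - j) x \<le> comp_block \<alpha> \<beta> \<sigma> j (n - j) y"
  shows "x \<le> y"
  using assms by (intro comp_block_le_cancel[of "n - j" \<alpha> \<sigma> j \<beta> x y])
    (auto intro: alpha_pos_after_last_const)

lemma comp_block_through_last_const:
  assumes "j < last_const" "last_const \<le> j + d"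
  shows "comp_block \<alpha> \<beta> \<sigma> j d x = tail_value (j + d - last_const)"
  using comp_block_through_const[of j last_const d \<alpha> \<sigma>, OF assms last_const_props(3)]
  by (simp add: tail_value_def last_value_def)

lemma fpow_eq_tail_value: "fpow \<alpha> \<beta> n \<sigma> x = tail_value (n - last_const)"
  using comp_block_through_last_const[of 0 n x] last_const_props
  by (simp add: fpow_def comp_upto_eq_comp_block)

lemma composite_value_eq_tail_value: "composite_value = tail_value (n - last_const)"
  by (simp add: composite_value_def fpow_eq_tail_value)

lemma composite_value_le_last_value: "composite_value \<le> last_value"
proof (cases "last_const < n")
  case True
  note q = last_const_props
  have "1 = last_const - (last_const - 1)" "Suc (last_const - 1) = last_const" using q by auto
  then show ?thesis
    using locally_optimal_block_swap_le[OF locopt q(1) order.refl True order.refl, of 0] q(3)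
    by (simp add: lin_def composite_value_eq_tail_value tail_value_def last_value_def)
next
  case False
  then show ?thesis using last_const_props by (simp add: composite_value_eq_tail_value tail_value_def)
qed

lemma last_value_le_lin:
  assumes "i \<in> {1..last_const}"
  shows "last_value \<le> lin (\<alpha> (\<sigma> i)) (\<beta> (\<sigma> i)) last_value"
proof (cases "i = last_const")
  case False
  note q = last_const_props
  have i: "1 \<le> i" "i < last_const" using assms False by auto
  have "1 = i - (i - 1)" "Suc (i - 1) = i" using i by auto
  then have "comp_block \<alpha> \<beta> \<sigma> last_const (n - last_const) last_value
      \<le> comp_block \<alpha> \<beta> \<sigma> last_const (n - last_const) (lin (\<alpha> (\<sigma> i)) (\<beta> (\<sigma> i)) last_value)"
    using locally_optimal_block_swap_le[OF locopt i(1) order.refl i(2) q(2), of 0]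
      comp_block_through_last_const[of i "last_const - i"] i
    by (simp add: tail_value_def)
  then show ?thesis by (rule comp_block_le_cancel_after_last_const[OF order.refl])
qed (simp add: lin_def last_const_props last_value_def)

lemma composite_value_le_lin:
  assumes "i \<in> {1..last_const}"
  shows "composite_value \<le> lin (\<alpha> (\<sigma> i)) (\<beta> (\<sigma> i)) composite_value"
proof (cases "i = last_const")
  case False
  note q = last_const_props
  have i: "1 \<le> i" "i < last_const" using assms False by auto
  have "1 = i - (i - 1)" "Suc (i - 1) = i" using i by auto
  then show ?thesis
    using locally_optimal_block_swap_le[OF locopt, of i i n 0]
      comp_block_through_last_const[of i "n - i"] i q(2)
    by (simp add: composite_value_eq_tail_value)
qed (use composite_value_le_last_value in \<open>simp add: lin_def last_const_props last_value_def\<close>)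

lemma tail_value_Suc_le:
  assumes "last_const + Suc d \<le> n"
  shows "tail_value (Suc d) \<le> tail_value d"
proof -
  note q = last_const_props
  let ?m = "last_const + d" and ?r = "last_const + Suc d"
  have "Suc (last_const - 1) = last_const" using q by auto
  then have "comp_block \<alpha> \<beta> \<sigma> ?r (n - ?r) (tail_value (Suc d))
      \<le> comp_block \<alpha> \<beta> \<sigma> ?r (n - ?r) (tail_value d)"
    using locally_optimal_block_swap_le[OF locopt q(1), of ?m ?r, of 0] assms
      comp_block_through_last_const[of "last_const - 1" "?m - (last_const - 1)"] q(1)
    by (simp add: tail_value_def)
  then show ?thesis by (rule comp_block_le_cancel_after_last_const[rotated]) simp
qed

lemma tail_value_bounds:
  assumes "d \<le> n - last_const"
  shows "composite_value \<le> tail_value d" "tail_value d \<le> last_value"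
proof -
  show "composite_value \<le> tail_value d"
    using assms
  proof (induction d rule: inc_induct)
    case (step d)
    then show ?case using tail_value_Suc_le[of d] by (simp add: less_diff_conv)
  qed (simp add: composite_value_eq_tail_value)
  show "tail_value d \<le> last_value"
    using assms
  proof (induction d)
    case (Suc d)
    then show ?case using tail_value_Suc_le[of d] by (simp add: le_diff_conv2 last_const_props)
  qed (simp add: tail_value_def)
qed

lemma below_diagonal_after_last_const:
  assumes "i \<in> {last_const..n}"
  obtains y where "composite_value \<le> y" "y \<le> last_value" "lin (\<alpha> (\<sigma> i)) (\<beta> (\<sigma> i)) y \<le> y"
proof (cases "i = last_const")
  case True
  then show ?thesis
    using that[of last_value] composite_value_le_last_value
    by (simp add: lin_def last_const_props last_value_def)
next
  case False
  then obtain d where d: "i = last_const + Suc d" using assms less_imp_Suc_add[of last_const i] by auto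
  then have "tail_value (Suc d) = lin (\<alpha> (\<sigma> i)) (\<beta> (\<sigma> i)) (tail_value d)"
    by (simp add: tail_value_def)
  then show ?thesis
    using that[of "tail_value d"] tail_value_Suc_le[of d] tail_value_bounds[of d] assms d by auto
qed

lemma Min_const_beta_eq_last_value:
  "Min {\<beta> i | i. i \<in> {1..n} \<and> \<alpha> i = 0} = last_value"
proof (rule Min_eqI)
  show "last_value \<in> {\<beta> i | i. i \<in> {1..n} \<and> \<alpha> i = 0}"
    using last_const_props permutes_in_image[OF perm] by (auto simp: last_value_def)
next
  fix b assume "b \<in> {\<beta> i | i. i \<in> {1..n} \<and> \<alpha> i = 0}"
  then obtain j where j: "b = \<beta> j" "j \<in> {1..n}" "\<alpha> j = 0" by blast
  then obtain p where p: "p \<in> {1..n}" "\<sigma> p = j" using perm by (metis permutes_image imageE)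
  then have "p \<in> {1..last_const}" using j const_position_le_last_const[of p] by auto
  then show "last_value \<le> b" using last_value_le_lin[of p] p j by (simp add: lin_def)
qed simp

end

theorem mainTheorem18:
  fixes \<alpha> \<beta> :: "nat \<Rightarrow> real" and n :: nat and \<sigma> :: "nat \<Rightarrow> nat"
  assumes nondec: "\<forall>i\<in>{1..n}. 0 \<le> \<alpha> i"
    and const_ex: "\<exists>i\<in>{1..n}. \<alpha> i = 0"
    and perm: "\<sigma> permutes {1..n}"
    and locopt: "locally_optimal \<alpha> \<beta> n \<sigma>"
  defines "\<beta>min \<equiv> Min {\<beta> i | i. i \<in> {1..n} \<and> \<alpha> i = 0}"
    and "q \<equiv> Max {q \<in> {1..n}. \<alpha> (\<sigma> q) = 0}"
    and "c \<equiv> fpow \<alpha> \<beta> n \<sigma> 0"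
  shows "(\<forall>x. fpow \<alpha> \<beta> n \<sigma> x = c)
    \<and> c \<le> \<beta>min
    \<and> \<alpha> (\<sigma> q) = 0 \<and> \<beta> (\<sigma> q) = \<beta>min
    \<and> (\<forall>i\<in>{1..q}. theta_lin (\<alpha> (\<sigma> i)) (\<beta> (\<sigma> i)) = None \<or>
          (\<exists>t. theta_lin (\<alpha> (\<sigma> i)) (\<beta> (\<sigma> i)) = Some t \<and>
               t \<in> cyc_interval (theta_const c - pi) (theta_const \<beta>min)))
    \<and> (\<forall>i\<in>{q..n}. theta_lin (\<alpha> (\<sigma> i)) (\<beta> (\<sigma> i)) = None \<or>
          (\<exists>t. theta_lin (\<alpha> (\<sigma> i)) (\<beta> (\<sigma> i)) = Some t \<and>
               t \<in> {theta_const \<beta>min .. theta_const c + pi}))"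
proof -
  interpret locally_optimal_family \<alpha> \<beta> n \<sigma>
    using assms by unfold_locales
  have q: "q = last_const" and c: "c = composite_value"
    by (simp_all add: q_def last_const_def c_def composite_value_def)
  have \<beta>min: "\<beta>min = last_value"
    unfolding \<beta>min_def by (rule Min_const_beta_eq_last_value)
  have "theta_lin (\<alpha> (\<sigma> i)) (\<beta> (\<sigma> i)) = None \<or>
          (\<exists>t. theta_lin (\<alpha> (\<sigma> i)) (\<beta> (\<sigma> i)) = Some t \<and>
               t \<in> cyc_interval (theta_const c - pi) (theta_const \<beta>min))" if "i \<in> {1..q}" for i
    using lin_ge_at_two_points_imp_theta_mem[OF composite_value_le_last_value
        last_value_le_lin[of i] composite_value_le_lin[of i]] that
    by (auto simp: theta_lin_def q c \<beta>min)
  moreover have "theta_lin (\<alpha> (\<sigma> i)) (\<beta> (\<sigma> i)) = None \<or>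
          (\<exists>t. theta_lin (\<alpha> (\<sigma> i)) (\<beta> (\<sigma> i)) = Some t \<and>
               t \<in> {theta_const \<beta>min .. theta_const c + pi})" if i: "i \<in> {q..n}" for i
  proof -
    obtain y where "composite_value \<le> y" "y \<le> last_value" "lin (\<alpha> (\<sigma> i)) (\<beta> (\<sigma> i)) y \<le> y"
      using below_diagonal_after_last_const[of i] i unfolding q by blast
    then show ?thesis
      using lin_le_somewhere_imp_theta_mem by (auto simp: theta_lin_def c \<beta>min)
  qed
  ultimately show ?thesis
    using fpow_eq_tail_value composite_value_eq_tail_value composite_value_le_last_value last_const_props(3)
    by (simp add: q c \<beta>min last_value_def)
qed

end
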